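(* Let $G_1=(V,D_1,B_1)$ and $G_2=(V,D_2,B_2)$ be two simple mixed graphs on the same vertex set with the same skeleton and the same collider triples. Then $\overline{\mathcal{M}_{G_1}}=\overline{\mathcal{M}_{G_2}}$, i.e., $G_1$ and $G_2$ are distributionally equivalent up to closure.
   Context: A mixed graph with finite vertex set $V$ is a triple $G=(V,D,B)$, where $D$ is a set of ordered pairs $(i,j)$, $i\neq j$ (directed edges $i\to j$, with head $j$) and $B$ a set of unordered pairs $\{i,j\}$, $i\neq j$ (bidirected edges $i\leftrightarrow j$, both endpoints are called heads). $G$ is simple if any two distinct nodes are joined by at most one edge of any type. The skeleton of $G$ is the undirected graph obtained by replacing all edges by undirected edges. A collider triple is a triple of vertices $(i,j,k)$ such that there is an edge between $i$ and $j$ and an edge between $j$ and $k$, with $j$ a head of both edges (i.e. $i\to j\leftarrow k$, $i\leftrightarrow j\leftarrow k$, $i\to j\leftrightarrow k$, or $i\leftrightarrow j\leftrightarrow k$), regardless of whether $i$ and $k$ are adjacent. $\mathbb{R}^D_{\mathrm{reg}}$ is the set of real $V\times V$ matrices $\Lambda$ with $\lambda_{ij}=0$ for $(i,j)\notin D$ and $I-\Lambda$ invertible; $\mathit{PD}(B)$ is the set of positive definite $V\times V$ matrices $\Omega$ with $\omega_{ij}=0$ for $i\ne j$, $\{i,j\}\notin B$. $\mathcal{M}_G=\{(I-\Lambda)^{-T}\Omega(I-\Lambda)^{-1}:\Lambda\in\mathbb{R}^D_{\mathrm{reg}},\Omega\in\mathit{PD}(B)\}$, and $\overline{\mathcal{M}_G}$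 denotes its closure in the Euclidean topology. *)

theory Defs
  imports "HOL-Analysis.Analysis"
begin

text \<open>Mixed graph on the finite vertex type 'n: directed edges D (ordered pairs (i,j) = i -> j)
  and bidirected edges B (unordered pairs, represented as two-element sets {i,j}).\<close>

definition mixed_graph :: "('n \<times> 'n) set \<Rightarrow> 'n set set \<Rightarrow> bool" where
  "mixed_graph D B \<longleftrightarrow> (\<forall>(i,j)\<in>D. i \<noteq> j) \<and> (\<forall>e\<in>B. \<exists>i j. i \<noteq> j \<and> e = {i,j})"

definition simple_mixed_graph :: "('n \<times> 'n) set \<Rightarrow> 'n set set \<Rightarrow> bool" where
  "simple_mixed_graph D B \<longleftrightarrow> mixed_graph D B \<and>
     (\<forall>i j. i \<noteq> j \<longrightarrow>
        \<not> ((i,j) \<in> D \<and> (j,i) \<in> D) \<and>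
        \<not> ((i,j) \<in> D \<and> {i,j} \<in> B) \<and>
        \<not> ((j,i) \<in> D \<and> {i,j} \<in> B))"

definition skeleton :: "('n \<times> 'n) set \<Rightarrow> 'n set set \<Rightarrow> 'n set set" where
  "skeleton D B = {{i,j} | i j. (i,j) \<in> D} \<union> B"

definition head_edge :: "('n \<times> 'n) set \<Rightarrow> 'n set set \<Rightarrow> 'n \<Rightarrow> 'n \<Rightarrow> bool" where
  "head_edge D B i j \<longleftrightarrow> (i,j) \<in> D \<or> {i,j} \<in> B"

text \<open>Collider triples (i,j,k), i,j,k a triple of (distinct) vertices, i and k possibly adjacent.\<close>
definition colliders :: "('n \<times> 'n) set \<Rightarrow> 'n set set \<Rightarrow> ('n \<times> 'n \<times> 'n) set" where
  "colliders D B = {(i,j,k). i \<noteq> k \<and> head_edge D B i j \<and> head_edge D B k j}"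

definition RD_reg :: "('n::finite \<times> 'n) set \<Rightarrow> (real^'n^'n) set" where
  "RD_reg D = {\<Lambda>. (\<forall>i j. (i,j) \<notin> D \<longrightarrow> \<Lambda> $ i $ j = 0) \<and> invertible (mat 1 - \<Lambda>)}"

definition pos_def_matrix :: "real^'n^'n \<Rightarrow> bool" where
  "pos_def_matrix M \<longleftrightarrow> transpose M = M \<and> (\<forall>x. x \<noteq> 0 \<longrightarrow> x \<bullet> (M *v x) > 0)"

definition PD :: "'n::finite set set \<Rightarrow> (real^'n^'n) set" where
  "PD B = {\<Omega>. pos_def_matrix \<Omega> \<and> (\<forall>i j. i \<noteq> j \<and> {i,j} \<notin> B \<longrightarrow> \<Omega> $ i $ j = 0)}"

definition model :: "('n::finite \<times> 'n) set \<Rightarrow> 'n set set \<Rightarrow> (real^'n^'n) set" where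
  "model D B = {transpose (matrix_inv (mat 1 - \<Lambda>)) ** \<Omega> ** matrix_inv (mat 1 - \<Lambda>)
                 | \<Lambda> \<Omega>. \<Lambda> \<in> RD_reg D \<and> \<Omega> \<in> PD B}"

end

theory Submission
  imports Defs
begin

text \<open>A mixed graph is encoded by its head relation \<open>h\<close>: \<open>h i j\<close> says that an edge between \<open>i\<close> and
  \<open>j\<close> has a head at \<open>j\<close>. Let \<open>h\<close> and \<open>g\<close> have the same skeleton and colliders but differ; every
  column on which they differ has a single head in each. One of three moves then brings \<open>h\<close> (or
  symmetrically \<open>g\<close>) closer to the other without changing the closure of its model: replace a
  bidirected edge \<open>p \<leftrightarrow> j\<close> at a disagreeing column \<open>p\<close> by \<open>p \<rightarrow> j\<close>; turn an edge \<open>p \<rightarrow> j\<close> out of a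
  source \<open>p\<close> into \<open>p \<leftrightarrow> j\<close> when \<open>g\<close> has a head at \<open>p\<close>; or, if neither applies, reverse the directed
  cycles of \<open>h\<close> formed by the disagreeing columns, which \<open>g\<close> reverses. Each move is a
  reparametrisation \<open>(I - \<Lambda>, \<Omega>) \<mapsto> ((I - \<Lambda>) E, E\<^sup>T \<Omega> E)\<close>, with a transvection \<open>E\<close> for the
  first two. For the cycles \<open>E\<close> divides by the cycle coefficients, so it only covers the dense set
  where these are nonzero; this is why the models agree only up to closure. Induction on the
  number of disagreeing entries concludes.\<close>

section \<open>Reparametrising the covariance\<close>

lemma sum_UNIV_eq_single:
  fixes g :: "'n::finite \<Rightarrow> 'a::comm_monoid_add"
  shows "(\<And>k. k \<noteq> k0 \<Longrightarrow> g k = 0) \<Longrightarrow> (\<Sum>k\<in>UNIV. g k) = g k0"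
  by (subst sum.remove[of UNIV k0]) (auto intro: sum.neutral)

lemma matrix_inv_right:
  fixes A :: "'a::semiring_1^'n^'n"
  assumes "invertible A"
  shows "A ** matrix_inv A = mat 1"
  using someI_ex[OF assms[unfolded invertible_def]] unfolding matrix_inv_def by auto

lemma matrix_inv_left:
  fixes A :: "'a::semiring_1^'n^'n"
  assumes "invertible A"
  shows "matrix_inv A ** A = mat 1"
  using someI_ex[OF assms[unfolded invertible_def]] unfolding matrix_inv_def by auto

lemma matrix_inv_mult:
  fixes A B :: "'a::comm_ring_1^'n^'n"
  assumes A: "invertible A" and B: "invertible B"
  shows "matrix_inv (A ** B) = matrix_inv B ** matrix_inv A"
proof -
  have AB: "invertible (A ** B)" using A B invertible_mult by blast
  have "(A ** B) ** (matrix_inv B ** matrix_inv A) = mat 1"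
    by (metis A B matrix_mul_assoc matrix_mul_rid matrix_inv_right)
  then have "matrix_inv (A ** B) = matrix_inv (A ** B) ** ((A ** B) ** (matrix_inv B ** matrix_inv A))"
    by simp
  also have "\<dots> = matrix_inv B ** matrix_inv A"
    by (metis AB matrix_mul_assoc matrix_mul_lid matrix_inv_left)
  finally show ?thesis .
qed

lemma pos_def_matrix_symmetric:
  "pos_def_matrix \<Omega> \<Longrightarrow> \<Omega> $ a $ b = \<Omega> $ b $ a"
  unfolding pos_def_matrix_def by (metis transpose_def vec_lambda_beta)

lemma pos_def_matrix_diagonal_pos:
  assumes "pos_def_matrix \<Omega>"
  shows "\<Omega> $ p $ p > 0"
proof -
  have "axis p 1 \<bullet> (\<Omega> *v axis p 1) > 0"
    using assms unfolding pos_def_matrix_def by simp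
  moreover have "axis p 1 \<bullet> (\<Omega> *v axis p 1) = \<Omega> $ p $ p"
    by (simp add: inner_vec_def matrix_vector_mult_def axis_def if_distrib[of "(*) _"]
        if_distrib[of "\<lambda>x. x * _"] cong: if_cong)
  ultimately show ?thesis by simp
qed

lemma pos_def_matrix_congruence:
  fixes E \<Omega> :: "real^'n^'n"
  assumes E: "invertible E" and \<Omega>: "pos_def_matrix \<Omega>"
  shows "pos_def_matrix (transpose E ** \<Omega> ** E)"
  unfolding pos_def_matrix_def
proof safe
  show "transpose (transpose E ** \<Omega> ** E) = transpose E ** \<Omega> ** E"
    using \<Omega> unfolding pos_def_matrix_def by (simp add: matrix_transpose_mul matrix_mul_assoc)
next
  fix x :: "real^'n" assume "x \<noteq> 0"
  then have "E *v x \<noteq> 0"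
    using E inj_matrix_vector_mult by (metis injD matrix_vector_mult_0_right)
  then have "(E *v x) \<bullet> (\<Omega> *v (E *v x)) > 0" using \<Omega> unfolding pos_def_matrix_def by blast
  moreover have "x \<bullet> ((transpose E ** \<Omega> ** E) *v x) = (E *v x) \<bullet> (\<Omega> *v (E *v x))"
    by (simp add: matrix_vector_mul_assoc[symmetric]) (metis dot_lmul_matrix inner_commute)
  ultimately show "x \<bullet> ((transpose E ** \<Omega> ** E) *v x) > 0" by simp
qed

definition sem_cov :: "real^'n^'n \<Rightarrow> real^'n^'n \<Rightarrow> real^'n^'n" where
  "sem_cov \<Lambda> \<Omega> = transpose (matrix_inv (mat 1 - \<Lambda>)) ** \<Omega> ** matrix_inv (mat 1 - \<Lambda>)"

lemma model_eq: "model D B = {sem_cov \<Lambda> \<Omega> | \<Lambda> \<Omega>. \<Lambda> \<in> RD_reg D \<and> \<Omega> \<in> PD B}"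
  unfolding model_def sem_cov_def ..

lemma sem_cov_reparam:
  fixes \<Lambda> \<Omega> E :: "real^'n^'n"
  assumes A: "invertible (mat 1 - \<Lambda>)" and E: "invertible E"
  shows "sem_cov (mat 1 - (mat 1 - \<Lambda>) ** E) (transpose E ** \<Omega> ** E) = sem_cov \<Lambda> \<Omega>"
proof -
  have L': "mat 1 - (mat 1 - (mat 1 - \<Lambda>) ** E) = (mat 1 - \<Lambda>) ** E" by simp
  have tE: "transpose (matrix_inv E) ** transpose E = mat 1"
    by (metis E matrix_transpose_mul matrix_inv_right transpose_mat)
  have "sem_cov (mat 1 - (mat 1 - \<Lambda>) ** E) (transpose E ** \<Omega> ** E) =
     transpose (matrix_inv (mat 1 - \<Lambda>)) ** (transpose (matrix_inv E) ** transpose E) ** \<Omega>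
       ** (E ** matrix_inv E) ** matrix_inv (mat 1 - \<Lambda>)"
    unfolding sem_cov_def L' matrix_inv_mult[OF A E] matrix_transpose_mul
    by (simp add: matrix_mul_assoc)
  also have "\<dots> = sem_cov \<Lambda> \<Omega>"
    unfolding tE matrix_inv_right[OF E] sem_cov_def by simp
  finally show ?thesis .
qed

definition transvection :: "'n \<Rightarrow> 'n \<Rightarrow> real \<Rightarrow> real^'n^'n" where
  "transvection p j t = (\<chi> a b. (if a = b then 1 else 0) + (if a = p \<and> b = j then t else 0))"

lemma matrix_mul_transvection:
  "(X ** transvection p j t) $ a $ b = X $ a $ b + (if b = j then t * X $ a $ p else 0)"
  by (cases "b = j")
     (simp_all add: transvection_def matrix_matrix_mult_def distrib_left sum.distrib
        if_distrib[of "(*) _"] mult.commute cong: if_cong)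

lemma transvection_matrix_mul:
  "(transvection p j t ** X) $ a $ b = X $ a $ b + (if a = p then t * X $ j $ b else 0)"
  by (cases "a = p")
     (simp_all add: transvection_def matrix_matrix_mult_def distrib_right sum.distrib
        if_distrib[of "\<lambda>x. x * _"] cong: if_cong)

lemma transpose_transvection: "transpose (transvection p j t) = transvection j p t"
  by (simp add: transvection_def transpose_def vec_eq_iff)

lemma invertible_transvection:
  assumes "p \<noteq> j"
  shows "invertible (transvection p j t)"
proof -
  have "transvection p j t ** transvection p j (-t) = mat 1"
    using assms by (simp add: matrix_mul_transvection vec_eq_iff mat_def) (auto simp: transvection_def)
  then show ?thesis using invertible_right_inverse by blast
qed

lemma transvection_congruence:
  "(transpose (transvection p j t) ** \<Omega> ** transvection p j t) $ a $ b =
     \<Omega> $ a $ b + (if a = j then t * \<Omega> $ p $ b else 0) + (if b = j then t * \<Omega> $ a $ p else 0)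
       + (if a = j \<and> b = j then t * t * \<Omega> $ p $ p else 0)"
  by (simp add: transpose_transvection matrix_mul_transvection transvection_matrix_mul algebra_simps)

section \<open>Continuity of the covariance map\<close>

lemma tendsto_det:
  fixes M :: "'a \<Rightarrow> real^'n^'n"
  assumes "(M \<longlongrightarrow> A) F"
  shows "((\<lambda>x. det (M x)) \<longlongrightarrow> det A) F"
  unfolding det_def by (intro tendsto_intros tendsto_vec_nth assms)

lemma tendsto_matrix_mult:
  fixes X Y :: "'a \<Rightarrow> real^'n^'n"
  assumes "(X \<longlongrightarrow> X0) F" and "(Y \<longlongrightarrow> Y0) F"
  shows "((\<lambda>x. X x ** Y x) \<longlongrightarrow> X0 ** Y0) F"
  unfolding matrix_matrix_mult_def by (intro tendsto_intros tendsto_vec_nth assms)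

lemma tendsto_transpose:
  fixes X :: "'a \<Rightarrow> real^'n^'n"
  assumes "(X \<longlongrightarrow> X0) F"
  shows "((\<lambda>x. transpose (X x)) \<longlongrightarrow> transpose X0) F"
  unfolding transpose_def by (intro tendsto_intros tendsto_vec_nth assms)

definition replace_column :: "real^'n^'n \<Rightarrow> 'n \<Rightarrow> real^'n \<Rightarrow> real^'n^'n" where
  "replace_column M k v = (\<chi> r c. if c = k then v $ r else M $ r $ c)"

lemma matrix_inv_component_cramer:
  fixes M :: "real^'n^'n"
  assumes d: "det M \<noteq> 0"
  shows "matrix_inv M $ k $ j = det (replace_column M k (axis j 1)) / det M"
proof -
  have "M *v (matrix_inv M *v axis j 1) = axis j 1"
    using d by (simp add: matrix_vector_mul_assoc matrix_inv_right invertible_det_nz)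
  then have "matrix_inv M *v axis j 1 = (\<chi> k. det (replace_column M k (axis j 1)) / det M)"
    using cramer[OF d] unfolding replace_column_def by blast
  moreover have "(matrix_inv M *v axis j 1) $ k = matrix_inv M $ k $ j"
    by (simp add: matrix_vector_mult_def axis_def if_distrib[of "(*) _"] cong: if_cong)
  ultimately show ?thesis by simp
qed

lemma tendsto_matrix_inv:
  fixes M :: "'a \<Rightarrow> real^'n^'n"
  assumes M: "(M \<longlongrightarrow> A) F" and A: "invertible A"
  shows "((\<lambda>x. matrix_inv (M x)) \<longlongrightarrow> matrix_inv A) F"
proof (rule vec_tendstoI, rule vec_tendstoI)
  fix k j
  have dA: "det A \<noteq> 0" using A invertible_det_nz by blast
  have column: "((\<lambda>x. replace_column (M x) k v) \<longlongrightarrow> replace_column A k v) F" for v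
  proof (rule vec_tendstoI, rule vec_tendstoI)
    fix r c
    show "((\<lambda>x. replace_column (M x) k v $ r $ c) \<longlongrightarrow> replace_column A k v $ r $ c) F"
      by (cases "c = k") (simp_all add: replace_column_def tendsto_vec_nth M)
  qed
  have "((\<lambda>x. det (replace_column (M x) k (axis j 1)) / det (M x))
          \<longlongrightarrow> det (replace_column A k (axis j 1)) / det A) F"
    by (intro tendsto_divide tendsto_det column M dA)
  then have "((\<lambda>x. det (replace_column (M x) k (axis j 1)) / det (M x)) \<longlongrightarrow> matrix_inv A $ k $ j) F"
    using matrix_inv_component_cramer[OF dA] by simp
  moreover have "\<forall>\<^sub>F x in F. det (replace_column (M x) k (axis j 1)) / det (M x) = matrix_inv (M x) $ k $ j"
    using tendsto_imp_eventually_ne[OF tendsto_det[OF M] dA]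
    by eventually_elim (simp add: matrix_inv_component_cramer)
  ultimately show "((\<lambda>x. matrix_inv (M x) $ k $ j) \<longlongrightarrow> matrix_inv A $ k $ j) F"
    by (rule Lim_transform_eventually)
qed

lemma tendsto_sem_cov:
  fixes \<Lambda> :: "'a \<Rightarrow> real^'n^'n"
  assumes "(\<Lambda> \<longlongrightarrow> \<Lambda>0) F" and "invertible (mat 1 - \<Lambda>0)"
  shows "((\<lambda>x. sem_cov (\<Lambda> x) \<Omega>) \<longlongrightarrow> sem_cov \<Lambda>0 \<Omega>) F"
proof -
  have "((\<lambda>x. matrix_inv (mat 1 - \<Lambda> x)) \<longlongrightarrow> matrix_inv (mat 1 - \<Lambda>0)) F"
    by (intro tendsto_matrix_inv tendsto_intros assms)
  then show ?thesis
    unfolding sem_cov_def by (intro tendsto_matrix_mult tendsto_transpose tendsto_const)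
qed

section \<open>Toggling an edge out of a source\<close>

lemma RD_reg_zero: "\<Lambda> \<in> RD_reg D \<Longrightarrow> (a, b) \<notin> D \<Longrightarrow> \<Lambda> $ a $ b = 0"
  unfolding RD_reg_def by blast

lemma PD_zero: "\<Omega> \<in> PD B \<Longrightarrow> a \<noteq> b \<Longrightarrow> {a, b} \<notin> B \<Longrightarrow> \<Omega> $ a $ b = 0"
  unfolding PD_def by blast

lemma sem_cov_in_model:
  fixes \<Lambda> \<Omega> E :: "real^'n::finite^'n"
  assumes \<Lambda>: "invertible (mat 1 - \<Lambda>)" and \<Omega>: "pos_def_matrix \<Omega>" and E: "invertible E"
    and D: "\<And>a b. (a, b) \<notin> D \<Longrightarrow> (mat 1 - (mat 1 - \<Lambda>) ** E) $ a $ b = 0"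
    and B: "\<And>a b. a \<noteq> b \<Longrightarrow> {a, b} \<notin> B \<Longrightarrow> (transpose E ** \<Omega> ** E) $ a $ b = 0"
  shows "sem_cov \<Lambda> \<Omega> \<in> model D B"
proof -
  have "invertible (mat 1 - (mat 1 - (mat 1 - \<Lambda>) ** E))"
    using \<Lambda> E invertible_mult by auto
  then have "mat 1 - (mat 1 - \<Lambda>) ** E \<in> RD_reg D"
    using D unfolding RD_reg_def by blast
  moreover have "transpose E ** \<Omega> ** E \<in> PD B"
    using B pos_def_matrix_congruence[OF E \<Omega>] unfolding PD_def by blast
  ultimately show ?thesis
    unfolding model_eq sem_cov_reparam[OF \<Lambda> E, of \<Omega>, symmetric] by blast
qed

lemma transvection_reparam:
  assumes "\<And>a. \<Lambda> $ a $ p = 0"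
  shows "(mat 1 - (mat 1 - \<Lambda>) ** transvection p j t) $ a $ b = \<Lambda> $ a $ b - (if a = p \<and> b = j then t else 0)"
  using assms by (simp add: matrix_mul_transvection mat_def)

text \<open>The transvection \<open>I + t e\<^sub>p e\<^sub>j\<^sup>T\<close> moves the edge \<open>p \<rightarrow> j\<close> between \<open>\<Lambda>\<close> and \<open>\<Omega>\<close>:
  \<open>t = \<lambda>\<^sub>p\<^sub>j\<close> deletes the directed coefficient, \<open>t = -\<omega>\<^sub>j\<^sub>p / \<omega>\<^sub>p\<^sub>p\<close> the bidirected one.\<close>
lemma sem_cov_directed_to_bidirected:
  fixes \<Lambda> \<Omega> :: "real^'n::finite^'n"
  assumes pj: "p \<noteq> j" and \<Lambda>: "\<Lambda> \<in> RD_reg (insert (p, j) D)" and \<Omega>: "\<Omega> \<in> PD B"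
    and col_p: "\<And>a. \<Lambda> $ a $ p = 0" and row_p: "\<And>b. b \<noteq> p \<Longrightarrow> \<Omega> $ p $ b = 0"
  shows "sem_cov \<Lambda> \<Omega> \<in> model D (insert {p, j} B)"
proof (rule sem_cov_in_model[where E = "transvection p j (\<Lambda> $ p $ j)"])
  fix a b assume "(a, b) \<notin> D"
  then show "(mat 1 - (mat 1 - \<Lambda>) ** transvection p j (\<Lambda> $ p $ j)) $ a $ b = 0"
    using RD_reg_zero[OF \<Lambda>, of a b] unfolding transvection_reparam[OF col_p] by auto
next
  fix a b assume ab: "a \<noteq> b" "{a, b} \<notin> insert {p, j} B"
  have pd: "pos_def_matrix \<Omega>" using \<Omega> unfolding PD_def by blast
  have "\<Omega> $ a $ b = 0" using PD_zero[OF \<Omega> ab(1)] ab(2) by blast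
  moreover have "\<Omega> $ p $ b = 0" if "a = j"
  proof -
    have "b \<noteq> p" using ab(2) that by (auto simp: insert_commute)
    then show ?thesis by (rule row_p)
  qed
  moreover have "\<Omega> $ a $ p = 0" if "b = j"
  proof -
    have "a \<noteq> p" using ab(2) that by auto
    then show ?thesis using row_p pos_def_matrix_symmetric[OF pd] by metis
  qed
  ultimately show "(transpose (transvection p j (\<Lambda> $ p $ j)) ** \<Omega> ** transvection p j (\<Lambda> $ p $ j)) $ a $ b = 0"
    using ab(1) unfolding transvection_congruence by auto
qed (use \<Lambda> \<Omega> pj in \<open>auto simp: RD_reg_def PD_def intro: invertible_transvection\<close>)

lemma sem_cov_bidirected_to_directed:
  fixes \<Lambda> \<Omega> :: "real^'n::finite^'n"
  assumes pj: "p \<noteq> j" and \<Lambda>: "\<Lambda> \<in> RD_reg D" and \<Omega>: "\<Omega> \<in> PD (insert {p, j} B)"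
    and col_p: "\<And>a. \<Lambda> $ a $ p = 0" and row_p: "\<And>b. b \<noteq> p \<Longrightarrow> b \<noteq> j \<Longrightarrow> \<Omega> $ p $ b = 0"
  shows "sem_cov \<Lambda> \<Omega> \<in> model (insert (p, j) D) B"
proof -
  have pd: "pos_def_matrix \<Omega>" using \<Omega> unfolding PD_def by blast
  define t where "t = - \<Omega> $ j $ p / \<Omega> $ p $ p"
  have t: "\<Omega> $ j $ p + t * \<Omega> $ p $ p = 0"
    using pos_def_matrix_diagonal_pos[OF pd, of p] unfolding t_def by simp
  show ?thesis
  proof (rule sem_cov_in_model[where E = "transvection p j t"])
    fix a b assume "(a, b) \<notin> insert (p, j) D"
    then show "(mat 1 - (mat 1 - \<Lambda>) ** transvection p j t) $ a $ b = 0"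
      using RD_reg_zero[OF \<Lambda>, of a b] unfolding transvection_reparam[OF col_p] by auto
  next
    fix a b assume ab: "a \<noteq> b" "{a, b} \<notin> B"
    show "(transpose (transvection p j t) ** \<Omega> ** transvection p j t) $ a $ b = 0"
    proof (cases "{a, b} = {p, j}")
      case True
      then have "(a = j \<and> b = p) \<or> (a = p \<and> b = j)" by (auto simp: doubleton_eq_iff)
      then show ?thesis
        using t pj pos_def_matrix_symmetric[OF pd, of j p] by (auto simp: transvection_congruence)
    next
      case False
      then have "\<Omega> $ a $ b = 0" using PD_zero[OF \<Omega> ab(1)] ab(2) by blast
      moreover have "\<Omega> $ p $ b = 0" if "a = j"
      proof -
        have "b \<noteq> p" using False that by (auto simp: insert_commute)
        then show ?thesis using row_p ab(1) that by blast
      qed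
      moreover have "\<Omega> $ a $ p = 0" if "b = j"
      proof -
        have "a \<noteq> p" using False that by auto
        then show ?thesis using row_p[of a] ab(1) that pos_def_matrix_symmetric[OF pd] by metis
      qed
      ultimately show ?thesis using ab(1) by (auto simp: transvection_congruence)
    qed
  qed (use \<Lambda> pd pj in \<open>auto simp: RD_reg_def intro: invertible_transvection\<close>)
qed

section \<open>Head relations\<close>

definition directed_edges :: "('n \<Rightarrow> 'n \<Rightarrow> bool) \<Rightarrow> ('n \<times> 'n) set" where
  "directed_edges h = {(i, j). h i j \<and> \<not> h j i}"

definition bidirected_edges :: "('n \<Rightarrow> 'n \<Rightarrow> bool) \<Rightarrow> 'n set set" where
  "bidirected_edges h = {{i, j} | i j. h i j \<and> h j i}"

definition head_model :: "('n::finite \<Rightarrow> 'n \<Rightarrow> bool) \<Rightarrow> (real^'n^'n) set" where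
  "head_model h = model (directed_edges h) (bidirected_edges h)"

lemma mem_directed_edges: "(a, b) \<in> directed_edges h \<longleftrightarrow> h a b \<and> \<not> h b a"
  by (simp add: directed_edges_def)

lemma doubleton_in_bidirected_edges: "{a, b} \<in> bidirected_edges h \<longleftrightarrow> h a b \<and> h b a"
  by (auto simp: bidirected_edges_def doubleton_eq_iff)

lemma in_head_model_iff:
  "S \<in> head_model h \<longleftrightarrow>
     (\<exists>\<Lambda> \<Omega>. S = sem_cov \<Lambda> \<Omega> \<and> \<Lambda> \<in> RD_reg (directed_edges h) \<and> \<Omega> \<in> PD (bidirected_edges h))"
  unfolding head_model_def model_eq by blast

definition adjacent :: "('a \<Rightarrow> 'a \<Rightarrow> bool) \<Rightarrow> 'a \<Rightarrow> 'a \<Rightarrow> bool" where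
  "adjacent h i j \<longleftrightarrow> h i j \<or> h j i"

definition collider :: "('a \<Rightarrow> 'a \<Rightarrow> bool) \<Rightarrow> 'a \<Rightarrow> 'a \<Rightarrow> 'a \<Rightarrow> bool" where
  "collider h i j k \<longleftrightarrow> i \<noteq> k \<and> h i j \<and> h k j"

definition single_head :: "('a \<Rightarrow> 'a \<Rightarrow> bool) \<Rightarrow> 'a \<Rightarrow> bool" where
  "single_head h x \<longleftrightarrow> (\<forall>i k. h i x \<longrightarrow> h k x \<longrightarrow> i = k)"

definition disagreement :: "('a \<Rightarrow> 'b \<Rightarrow> bool) \<Rightarrow> ('a \<Rightarrow> 'b \<Rightarrow> bool) \<Rightarrow> ('a \<times> 'b) set" where
  "disagreement h g = {(i, x). h i x \<noteq> g i x}"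

lemma disagreement_commute: "disagreement h g = disagreement g h"
  unfolding disagreement_def by auto

lemma collider_eq_if_single_heads:
  assumes "\<And>i x. x \<notin> Z \<Longrightarrow> h i x = g i x"
    and "\<And>x. x \<in> Z \<Longrightarrow> single_head h x" and "\<And>x. x \<in> Z \<Longrightarrow> single_head g x"
  shows "collider h = collider g"
proof (intro ext)
  fix i j k
  show "collider h i j k = collider g i j k"
    by (cases "j \<in> Z") (use assms in \<open>auto simp: collider_def single_head_def\<close>)
qed

text \<open>Two distinct heads at \<open>x\<close> put every head at \<open>x\<close> into a collider at \<open>x\<close>, so equal colliders
  force equal columns.\<close>
lemma single_head_if_collider_eq:
  assumes col: "collider h = collider g" and differ: "h i x \<noteq> g i x"
  shows "single_head h x"
proof (rule ccontr)
  assume "\<not> single_head h x"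
  then obtain k l where kl: "h k x" "h l x" "k \<noteq> l" unfolding single_head_def by blast
  have coll: "collider h a x b \<longleftrightarrow> collider g a x b" for a b using col by simp
  have "g k x" "g l x" using coll[of k l] kl unfolding collider_def by auto
  have "h a x = g a x" for a
    using coll[of a k] coll[of a l] kl \<open>g k x\<close> \<open>g l x\<close> unfolding collider_def by metis
  with differ show False by blast
qed

lemma head_flipped_if_collider_eq:
  assumes col: "collider h = collider g" and differ: "h i x \<noteq> g i x" and "h u x"
  shows "\<not> g u x"
  using single_head_if_collider_eq[OF col differ] single_head_if_collider_eq[OF col[symmetric] not_sym[OF differ]]
    differ assms(3) unfolding single_head_def by blast

definition rel_update :: "('a \<Rightarrow> 'b \<Rightarrow> bool) \<Rightarrow> 'a \<Rightarrow> 'b \<Rightarrow> bool \<Rightarrow> 'a \<Rightarrow> 'b \<Rightarrow> bool" where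
  "rel_update h a b c = (\<lambda>i x. if i = a \<and> x = b then c else h i x)"

lemma directed_edges_rel_update:
  assumes "p \<noteq> j" and "h p j"
  shows "directed_edges (rel_update h j p False) = insert (p, j) (directed_edges (rel_update h j p True))"
  using assms by (auto simp: directed_edges_def rel_update_def)

lemma bidirected_edges_rel_update:
  assumes "h p j"
  shows "bidirected_edges (rel_update h j p True) = insert {p, j} (bidirected_edges (rel_update h j p False))"
proof (intro equalityI subsetI)
  fix e assume "e \<in> bidirected_edges (rel_update h j p True)"
  then obtain a b where e: "e = {a, b}" "rel_update h j p True a b" "rel_update h j p True b a"
    unfolding bidirected_edges_def by blast
  show "e \<in> insert {p, j} (bidirected_edges (rel_update h j p False))"
  proof (cases "{a, b} = {p, j}")
    case False
    then have "\<not> (a = j \<and> b = p)" "\<not> (b = j \<and> a = p)" by (auto simp: insert_commute)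
    then have "rel_update h j p False a b" "rel_update h j p False b a"
      using e(2,3) by (simp_all add: rel_update_def)
    then show ?thesis using e(1) unfolding bidirected_edges_def by blast
  qed (use e in simp)
next
  fix e assume "e \<in> insert {p, j} (bidirected_edges (rel_update h j p False))"
  moreover have "rel_update h j p True p j" "rel_update h j p True j p"
    using assms by (simp_all add: rel_update_def)
  moreover have "rel_update h j p True a b" if "rel_update h j p False a b" for a b
    using that by (simp add: rel_update_def split: if_splits)
  ultimately show "e \<in> bidirected_edges (rel_update h j p True)"
    unfolding bidirected_edges_def by blast
qed

text \<open>\<open>rel_update h j p True\<close> has the edge \<open>p \<leftrightarrow> j\<close>, \<open>rel_update h j p False\<close> the edge \<open>p \<rightarrow> j\<close>.\<close>
lemma head_model_source_edge_toggle:
  fixes h :: "'n::finite \<Rightarrow> 'n \<Rightarrow> bool"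
  assumes pj: "p \<noteq> j" and hpj: "h p j" and heads_p: "\<And>i. h i p \<Longrightarrow> i = j"
  shows "head_model (rel_update h j p True) = head_model (rel_update h j p False)"
    (is "head_model ?T = head_model ?F")
proof
  note directed = directed_edges_rel_update[of p j h, OF pj hpj]
  note bidirected = bidirected_edges_rel_update[of h p j, OF hpj]
  have col_p: "(a, p) \<notin> directed_edges ?T" for a
    using heads_p[of a] pj hpj by (auto simp: mem_directed_edges rel_update_def)
  show "head_model ?F \<subseteq> head_model ?T"
  proof
    fix S assume "S \<in> head_model ?F"
    then obtain \<Lambda> \<Omega> where S: "S = sem_cov \<Lambda> \<Omega>"
      and \<Lambda>: "\<Lambda> \<in> RD_reg (insert (p, j) (directed_edges ?T))" and \<Omega>: "\<Omega> \<in> PD (bidirected_edges ?F)"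
      unfolding in_head_model_iff directed by blast
    have "S \<in> model (directed_edges ?T) (insert {p, j} (bidirected_edges ?F))"
      unfolding S
    proof (rule sem_cov_directed_to_bidirected[OF pj \<Lambda> \<Omega>])
      show "\<Lambda> $ a $ p = 0" for a using RD_reg_zero[OF \<Lambda>] col_p pj by blast
      show "\<Omega> $ p $ b = 0" if "b \<noteq> p" for b
        using PD_zero[OF \<Omega> that[symmetric]] heads_p[of b]
        by (cases "b = j") (auto simp: doubleton_in_bidirected_edges rel_update_def)
    qed
    then show "S \<in> head_model ?T" unfolding head_model_def bidirected .
  qed
  show "head_model ?T \<subseteq> head_model ?F"
  proof
    fix S assume "S \<in> head_model ?T"
    then obtain \<Lambda> \<Omega> where S: "S = sem_cov \<Lambda> \<Omega>"
      and \<Lambda>: "\<Lambda> \<in> RD_reg (directed_edges ?T)" and \<Omega>: "\<Omega> \<in> PD (bidirected_edges ?T)"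
      unfolding in_head_model_iff by blast
    have "S \<in> model (insert (p, j) (directed_edges ?T)) (bidirected_edges ?F)"
      unfolding S
    proof (rule sem_cov_bidirected_to_directed[OF pj \<Lambda> \<Omega>[unfolded bidirected]])
      show "\<Lambda> $ a $ p = 0" for a using RD_reg_zero[OF \<Lambda>] col_p by blast
      show "\<Omega> $ p $ b = 0" if "b \<noteq> p" and "b \<noteq> j" for b
        using PD_zero[OF \<Omega> that(1)[symmetric]] heads_p[of b] that
        by (auto simp: doubleton_in_bidirected_edges rel_update_def)
    qed
    then show "S \<in> head_model ?F" unfolding head_model_def directed .
  qed
qed

lemma toggle_step:
  fixes h g :: "'n::finite \<Rightarrow> 'n \<Rightarrow> bool"
  assumes irr: "irreflp h" and hpj: "h p j" and heads_p: "\<And>i. h i p \<Longrightarrow> i = j"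
    and differ: "h j p \<noteq> g j p"
  shows "\<exists>h'. irreflp h' \<and> adjacent h' = adjacent h \<and> collider h' = collider h \<and>
           closure (head_model h') = closure (head_model h) \<and> disagreement h' g \<subset> disagreement h g"
proof -
  define h' where "h' = rel_update h j p (g j p)"
  have pj: "p \<noteq> j" using irr hpj by (auto simp: irreflp_def)
  have "irreflp h'" using irr pj by (simp add: irreflp_def rel_update_def h'_def)
  moreover have "adjacent h' = adjacent h"
    unfolding adjacent_def h'_def rel_update_def using hpj pj by (intro ext) auto
  moreover have "collider h' = collider h"
  proof (rule collider_eq_if_single_heads[of "{p}"])
    show "single_head h' x" and "single_head h x" if "x \<in> {p}" for x
      using that heads_p by (auto simp: single_head_def rel_update_def h'_def)
  qed (simp add: rel_update_def h'_def)
  moreover have "head_model h' = head_model h"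
  proof -
    have "head_model h' = head_model (rel_update h j p (h j p))"
      using head_model_source_edge_toggle[of p j h, OF pj hpj heads_p] unfolding h'_def
      by (cases "g j p"; cases "h j p") simp_all
    also have "rel_update h j p (h j p) = h" by (simp add: rel_update_def fun_eq_iff)
    finally show ?thesis .
  qed
  moreover have "disagreement h' g \<subset> disagreement h g"
  proof
    show "disagreement h' g \<subseteq> disagreement h g"
      by (auto simp: disagreement_def rel_update_def h'_def)
    show "disagreement h' g \<noteq> disagreement h g"
      using differ by (auto simp: disagreement_def rel_update_def h'_def)
  qed
  ultimately show ?thesis by metis
qed

section \<open>Reversing directed cycles\<close>

locale directed_cycles =
  fixes h :: "'n::finite \<Rightarrow> 'n \<Rightarrow> bool" and S :: "'n set" and par :: "'n \<Rightarrow> 'n"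
  assumes bij_par: "bij_betw par S S"
    and par_edge: "\<And>v. v \<in> S \<Longrightarrow> h (par v) v"
    and par_not_bidirected: "\<And>v. v \<in> S \<Longrightarrow> \<not> h v (par v)"
    and par_unique: "\<And>v i. v \<in> S \<Longrightarrow> h i v \<Longrightarrow> i = par v"
begin

definition reversed :: "'n \<Rightarrow> 'n \<Rightarrow> bool" where
  "reversed = (\<lambda>i x. if x \<in> S then i \<in> S \<and> par i = x else h i x)"

lemma par_in: "v \<in> S \<Longrightarrow> par v \<in> S"
  using bij_par bij_betwE by blast

lemma par_inj: "v \<in> S \<Longrightarrow> w \<in> S \<Longrightarrow> par v = par w \<Longrightarrow> v = w"
  using bij_par unfolding bij_betw_def inj_on_def by blast

lemma par_surj: "b \<in> S \<Longrightarrow> \<exists>k\<in>S. par k = b"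
  using bij_par unfolding bij_betw_def by (metis imageE)

lemma par_neq: "v \<in> S \<Longrightarrow> par v \<noteq> v"
  using par_edge par_not_bidirected by fastforce

lemma par_par_neq: "v \<in> S \<Longrightarrow> par (par v) \<noteq> v"
  using par_edge par_not_bidirected par_in by metis

context
  fixes \<Lambda> \<Omega> :: "real^'n^'n"
  assumes \<Lambda>: "\<Lambda> \<in> RD_reg (directed_edges h)" and \<Omega>: "\<Omega> \<in> PD (bidirected_edges h)"
    and cycle_coeff_nonzero: "\<And>v. v \<in> S \<Longrightarrow> \<Lambda> $ par v $ v \<noteq> 0"
begin

lemma \<Lambda>_zero: "\<not> (h a b \<and> \<not> h b a) \<Longrightarrow> \<Lambda> $ a $ b = 0"
  using RD_reg_zero[OF \<Lambda>, of a b] by (simp add: mem_directed_edges)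

lemma \<Omega>_zero: "a \<noteq> b \<Longrightarrow> \<not> (h a b \<and> h b a) \<Longrightarrow> \<Omega> $ a $ b = 0"
  using PD_zero[OF \<Omega>, of a b] by (simp add: doubleton_in_bidirected_edges)

lemma pos_def_\<Omega>: "pos_def_matrix \<Omega>"
  using \<Omega> unfolding PD_def by blast

lemma \<Lambda>_cycle_column: "k \<in> S \<Longrightarrow> a \<noteq> par k \<Longrightarrow> \<Lambda> $ a $ k = 0"
  using \<Lambda>_zero par_unique by blast

lemma \<Omega>_cycle_row: "k \<in> S \<Longrightarrow> l \<noteq> k \<Longrightarrow> \<Omega> $ k $ l = 0"
  using \<Omega>_zero par_unique par_not_bidirected by metis

text \<open>The reparametrisation turns the cycle coefficient \<open>\<lambda>\<^bsub>par k, k\<^esub>\<close> into the coefficient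
  \<open>1 / \<lambda>\<^bsub>par k, k\<^esub>\<close> of the reversed edge \<open>k \<rightarrow> par k\<close>.\<close>
definition E :: "real^'n^'n" where
  "E = (\<chi> a b. if b \<in> S then (if a \<in> S \<and> par a = b then -1 / \<Lambda> $ b $ a else 0)
               else (if a = b then 1 else 0))"

lemma E_nonzero: "E $ k $ a \<noteq> 0 \<Longrightarrow> (a \<in> S \<and> k \<in> S \<and> par k = a) \<or> (a \<notin> S \<and> k = a)"
  by (auto simp: E_def split: if_splits)

lemma invertible_E: "invertible E"
proof -
  define F :: "real^'n^'n" where
    "F = (\<chi> a b. if b \<in> S then (if a = par b then - \<Lambda> $ a $ b else 0) else (if a = b then 1 else 0))"
  have "(E ** F) $ a $ b = (if a = b then 1 else 0)" for a b
  proof (cases "b \<in> S")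
    case True
    have "(E ** F) $ a $ b = E $ a $ par b * F $ par b $ b"
      unfolding matrix_matrix_mult_def using True
      by (simp, intro sum_UNIV_eq_single) (auto simp: F_def)
    also have "\<dots> = (if a = b then 1 else 0)"
      using True par_in[OF True] cycle_coeff_nonzero[OF True] par_inj[of a b] by (auto simp: E_def F_def)
    finally show ?thesis .
  next
    case False
    have "(E ** F) $ a $ b = E $ a $ b * F $ b $ b"
      unfolding matrix_matrix_mult_def using False
      by (simp, intro sum_UNIV_eq_single) (auto simp: F_def)
    then show ?thesis using False by (simp add: E_def F_def)
  qed
  then have "E ** F = mat 1" by (simp add: vec_eq_iff mat_def)
  then show ?thesis using invertible_right_inverse by blast
qed

lemma reparam_\<Lambda>_zero:
  assumes pattern: "\<not> (reversed a b \<and> \<not> reversed b a)"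
  shows "(mat 1 - (mat 1 - \<Lambda>) ** E) $ a $ b = 0"
proof (cases "b \<in> S")
  case True
  obtain k where k: "k \<in> S" "par k = b" using par_surj[OF True] by blast
  have "((mat 1 - \<Lambda>) ** E) $ a $ b = (mat 1 - \<Lambda>) $ a $ k * E $ k $ b"
    unfolding matrix_matrix_mult_def using True
    by (simp, intro sum_UNIV_eq_single) (auto simp: E_def k par_inj)
  also have "\<dots> = ((if a = k then 1 else 0) - \<Lambda> $ a $ k) * (-1 / \<Lambda> $ b $ k)"
    using k True by (simp add: E_def mat_def)
  finally have entry: "(mat 1 - (mat 1 - \<Lambda>) ** E) $ a $ b
      = (if a = b then 1 else 0) - ((if a = k then 1 else 0) - \<Lambda> $ a $ k) * (-1 / \<Lambda> $ b $ k)"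
    by (simp add: mat_def)
  have coeff: "\<Lambda> $ b $ k \<noteq> 0" using cycle_coeff_nonzero[OF k(1)] k by simp
  show ?thesis
  proof (cases "a = b")
    case True
    then have "a \<noteq> k" using par_neq[OF k(1)] k by auto
    then show ?thesis using entry True coeff by simp
  next
    case False
    have "a \<noteq> k"
    proof
      assume "a = k"
      then have "reversed a b" and "\<not> reversed b a"
        using k par_par_neq[OF k(1)] True by (simp_all add: reversed_def)
      then show False using pattern by blast
    qed
    moreover have "\<Lambda> $ a $ k = 0" using \<Lambda>_cycle_column[OF k(1)] False k by auto
    ultimately show ?thesis using entry False by simp
  qed
next
  case False
  have "((mat 1 - \<Lambda>) ** E) $ a $ b = (mat 1 - \<Lambda>) $ a $ b * E $ b $ b"
    unfolding matrix_matrix_mult_def using False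
    by (simp, intro sum_UNIV_eq_single) (auto simp: E_def)
  then have "(mat 1 - (mat 1 - \<Lambda>) ** E) $ a $ b = \<Lambda> $ a $ b"
    using False by (simp add: E_def mat_def)
  moreover have "\<not> (h a b \<and> \<not> h b a)"
    using pattern False by (cases "a \<in> S") (auto simp: reversed_def)
  ultimately show ?thesis using \<Lambda>_zero by simp
qed

lemma reparam_\<Omega>_zero:
  assumes ab: "a \<noteq> b" and pattern: "\<not> (reversed a b \<and> reversed b a)"
  shows "(transpose E ** \<Omega> ** E) $ a $ b = 0"
proof -
  have "(transpose E ** \<Omega> ** E) $ a $ b = (\<Sum>l\<in>UNIV. \<Sum>k\<in>UNIV. E $ k $ a * \<Omega> $ k $ l * E $ l $ b)"
    by (simp add: matrix_matrix_mult_def transpose_def sum_distrib_right)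
  also have "\<dots> = 0"
  proof (intro sum.neutral ballI)
    fix l k
    show "E $ k $ a * \<Omega> $ k $ l * E $ l $ b = 0"
    proof (rule ccontr)
      assume "E $ k $ a * \<Omega> $ k $ l * E $ l $ b \<noteq> 0"
      then have Eka: "E $ k $ a \<noteq> 0" and \<Omega>kl: "\<Omega> $ k $ l \<noteq> 0" and Elb: "E $ l $ b \<noteq> 0" by auto
      show False
      proof (cases "k = l")
        case True
        then show False using E_nonzero[OF Eka] E_nonzero[OF Elb] ab by auto
      next
        case False
        have "\<Omega> $ l $ k \<noteq> 0"
          using \<Omega>kl pos_def_matrix_symmetric[OF pos_def_\<Omega>] by metis
        then have "k \<notin> S" "l \<notin> S" using \<Omega>_cycle_row \<Omega>kl False by metis+
        then have "a = k" "b = l" "a \<notin> S" "b \<notin> S" using E_nonzero[OF Eka] E_nonzero[OF Elb] by auto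
        moreover have "h k l \<and> h l k" using \<Omega>_zero \<Omega>kl False by blast
        ultimately show False using pattern by (simp add: reversed_def)
      qed
    qed
  qed
  finally show ?thesis .
qed

lemma sem_cov_in_reversed_model: "sem_cov \<Lambda> \<Omega> \<in> head_model reversed"
  unfolding head_model_def
proof (rule sem_cov_in_model[OF _ pos_def_\<Omega> invertible_E])
  show "invertible (mat 1 - \<Lambda>)" using \<Lambda> unfolding RD_reg_def by blast
qed (use reparam_\<Lambda>_zero reparam_\<Omega>_zero in \<open>auto simp: mem_directed_edges doubleton_in_bidirected_edges\<close>)

end

text \<open>Cycle coefficients that vanish are perturbed away; the covariance depends continuously on them.\<close>
lemma head_model_subset_closure_reversed: "head_model h \<subseteq> closure (head_model reversed)"
proof
  fix X assume "X \<in> head_model h"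
  then obtain \<Lambda> \<Omega> where X: "X = sem_cov \<Lambda> \<Omega>"
    and \<Lambda>: "\<Lambda> \<in> RD_reg (directed_edges h)" and \<Omega>: "\<Omega> \<in> PD (bidirected_edges h)"
    unfolding in_head_model_iff by blast
  define N :: "real^'n^'n" where "N = (\<chi> a b. if b \<in> S \<and> a = par b \<and> \<Lambda> $ a $ b = 0 then 1 else 0)"
  define \<Lambda>\<^sub>e where "\<Lambda>\<^sub>e = (\<lambda>e::real. \<Lambda> + e *\<^sub>R N)"
  have inv: "invertible (mat 1 - \<Lambda>)" using \<Lambda> unfolding RD_reg_def by blast
  have lim: "(\<Lambda>\<^sub>e \<longlongrightarrow> \<Lambda>) (at 0)" unfolding \<Lambda>\<^sub>e_def by (auto intro!: tendsto_eq_intros)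
  have "eventually (\<lambda>e. det (mat 1 - \<Lambda>\<^sub>e e) \<noteq> 0) (at 0)"
    using tendsto_imp_eventually_ne[OF tendsto_det[OF tendsto_diff[OF tendsto_const lim]]]
      inv invertible_det_nz by blast
  moreover have "eventually (\<lambda>e::real. e \<noteq> 0) (at 0)" by (rule eventually_neq_at_within)
  ultimately have "eventually (\<lambda>e. sem_cov (\<Lambda>\<^sub>e e) \<Omega> \<in> head_model reversed) (at 0)"
  proof eventually_elim
    case (elim e)
    have "\<Lambda>\<^sub>e e \<in> RD_reg (directed_edges h)"
      unfolding RD_reg_def
    proof (intro CollectI conjI allI impI)
      fix a b assume ab: "(a, b) \<notin> directed_edges h"
      then have "\<Lambda> $ a $ b = 0" by (rule RD_reg_zero[OF \<Lambda>])
      then show "\<Lambda>\<^sub>e e $ a $ b = 0"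
        using ab par_edge par_not_bidirected by (auto simp: \<Lambda>\<^sub>e_def N_def mem_directed_edges)
    next
      show "invertible (mat 1 - \<Lambda>\<^sub>e e)" using elim invertible_det_nz by blast
    qed
    moreover have "\<Lambda>\<^sub>e e $ par v $ v \<noteq> 0" if "v \<in> S" for v
      using that elim by (auto simp: \<Lambda>\<^sub>e_def N_def)
    ultimately show ?case using sem_cov_in_reversed_model \<Omega> by blast
  qed
  moreover have "((\<lambda>e. sem_cov (\<Lambda>\<^sub>e e) \<Omega>) \<longlongrightarrow> X) (at 0)"
    unfolding X by (rule tendsto_sem_cov[OF lim inv])
  ultimately show "X \<in> closure (head_model reversed)"
    by (intro Lim_in_closed_set[of _ _ "at (0::real)"])
       (auto elim: eventually_mono intro: closure_subset[THEN subsetD])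
qed

lemma reversed_in_cycle: "x \<in> S \<Longrightarrow> reversed i x \<longleftrightarrow> i \<in> S \<and> par i = x"
  by (simp add: reversed_def)

lemma reversed_outside: "x \<notin> S \<Longrightarrow> reversed i x \<longleftrightarrow> h i x"
  by (simp add: reversed_def)

lemma irreflp_reversed: "irreflp h \<Longrightarrow> irreflp reversed"
  using par_neq by (auto simp: irreflp_def reversed_def)

lemma adjacent_reversed: "adjacent reversed = adjacent h"
proof (intro ext)
  fix i j
  have edge: "h i x \<longleftrightarrow> i = par x" if "x \<in> S" for i x using that par_edge par_unique by blast
  show "adjacent reversed i j = adjacent h i j"
    using edge[of i] edge[of j] par_in by (auto simp: adjacent_def reversed_def)
qed

lemma collider_reversed: "collider reversed = collider h"
proof (rule collider_eq_if_single_heads[of S])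
  show "single_head reversed x" if "x \<in> S" for x
    using that par_inj by (auto simp: single_head_def reversed_def)
  show "single_head h x" if "x \<in> S" for x
    using that par_unique by (auto simp: single_head_def)
qed (simp add: reversed_def)

lemma directed_cycles_reversed: "directed_cycles reversed S (inv_into S par)"
proof
  show "bij_betw (inv_into S par) S S" by (rule bij_betw_inv_into[OF bij_par])
next
  fix v assume v: "v \<in> S"
  have inv: "inv_into S par v \<in> S" "par (inv_into S par v) = v"
    using bij_par v by (auto simp: bij_betw_inv_into_right bij_betwE[OF bij_betw_inv_into])
  then show "reversed (inv_into S par v) v" using v by (simp add: reversed_def)
  show "\<not> reversed v (inv_into S par v)"
    using inv par_par_neq[of "inv_into S par v"] v by (auto simp: reversed_def)
  show "reversed i v \<Longrightarrow> i = inv_into S par v" for i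
    using v bij_par by (auto simp: reversed_def bij_betw_inv_into_left)
qed

lemma reversed_reversed: "directed_cycles.reversed reversed S (inv_into S par) = h"
proof (intro ext)
  fix i x
  show "directed_cycles.reversed reversed S (inv_into S par) i x = h i x"
  proof (cases "x \<in> S")
    case True
    have "(i \<in> S \<and> inv_into S par i = x) \<longleftrightarrow> i = par x"
      using True bij_par par_in by (auto simp: bij_betw_inv_into_left bij_betw_inv_into_right)
    then show ?thesis
      using True par_edge par_unique
      by (auto simp: directed_cycles.reversed_in_cycle[OF directed_cycles_reversed True] reversed_in_cycle)
  next
    case False
    then show ?thesis
      by (simp add: directed_cycles.reversed_outside[OF directed_cycles_reversed False] reversed_outside)
  qed
qed

lemma closure_head_model_reversed: "closure (head_model reversed) = closure (head_model h)"
proof -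
  have "closure (head_model reversed) \<subseteq> closure (head_model h)"
    using directed_cycles.head_model_subset_closure_reversed[OF directed_cycles_reversed]
    unfolding reversed_reversed by (simp add: closure_minimal)
  moreover have "closure (head_model h) \<subseteq> closure (head_model reversed)"
    using head_model_subset_closure_reversed by (simp add: closure_minimal)
  ultimately show ?thesis by blast
qed

end

section \<open>Induction on the disagreement\<close>

text \<open>When no toggle applies, bidirected edges only enter columns on which \<open>h\<close> and \<open>g\<close> agree, and
  every edge of \<open>h\<close> that \<open>g\<close> reverses leaves a vertex that receives an edge. The disagreeing
  columns with a head in \<open>h\<close> then carry directed cycles of \<open>h\<close>, all of which \<open>g\<close> reverses.\<close>
locale cyclic_disagreement =
  fixes h g :: "'n::finite \<Rightarrow> 'n \<Rightarrow> bool"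
  assumes adj: "adjacent h = adjacent g" and col: "collider h = collider g"
    and no_bidirected: "\<And>u w i. h u w \<Longrightarrow> h w u \<Longrightarrow> h i w = g i w"
    and no_source: "\<And>u w. h u w \<Longrightarrow> g w u \<Longrightarrow> \<exists>i. h i u"
begin

definition cycle_vertices :: "'n set" where
  "cycle_vertices = {w. (\<exists>i. h i w \<noteq> g i w) \<and> (\<exists>u. h u w)}"

definition parent :: "'n \<Rightarrow> 'n" where
  "parent w = (SOME u. h u w)"

lemma cycle_vertexE:
  assumes "w \<in> cycle_vertices"
  obtains i where "h i w \<noteq> g i w"
  using assms unfolding cycle_vertices_def by blast

lemma parent_edge: "w \<in> cycle_vertices \<Longrightarrow> h (parent w) w"
  unfolding cycle_vertices_def parent_def by (metis (mono_tags) mem_Collect_eq someI_ex)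

lemma parent_unique:
  assumes w: "w \<in> cycle_vertices" and "h i w"
  shows "i = parent w"
proof -
  obtain k where "h k w \<noteq> g k w" using w by (rule cycle_vertexE)
  then show ?thesis
    using single_head_if_collider_eq[OF col] assms(2) parent_edge[OF w] unfolding single_head_def by blast
qed

lemma parent_directed:
  assumes w: "w \<in> cycle_vertices"
  shows "\<not> h w (parent w)"
proof
  assume "h w (parent w)"
  then have "h i w = g i w" for i using no_bidirected[OF parent_edge[OF w]] by blast
  then show False using w by (blast elim: cycle_vertexE)
qed

lemma parent_edge_reversed:
  assumes w: "w \<in> cycle_vertices"
  shows "g w (parent w)"
proof -
  obtain k where "h k w \<noteq> g k w" using w by (rule cycle_vertexE)
  then have "\<not> g (parent w) w" using head_flipped_if_collider_eq[OF col] parent_edge[OF w] by blast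
  moreover have "adjacent g (parent w) w" using adj parent_edge[OF w] by (metis adjacent_def)
  ultimately show ?thesis unfolding adjacent_def by blast
qed

lemma parent_in:
  assumes w: "w \<in> cycle_vertices"
  shows "parent w \<in> cycle_vertices"
proof -
  have "h w (parent w) \<noteq> g w (parent w)" using parent_directed[OF w] parent_edge_reversed[OF w] by blast
  moreover have "\<exists>i. h i (parent w)" using no_source[OF parent_edge[OF w] parent_edge_reversed[OF w]] .
  ultimately show ?thesis unfolding cycle_vertices_def by blast
qed

lemma single_head_g_parent: "w \<in> cycle_vertices \<Longrightarrow> single_head g (parent w)"
  using single_head_if_collider_eq[OF col[symmetric]] parent_in by (metis cycle_vertexE)

lemma bij_betw_parent: "bij_betw parent cycle_vertices cycle_vertices"
proof -
  have inj: "inj_on parent cycle_vertices"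
  proof (rule inj_onI)
    fix w1 w2 assume w: "w1 \<in> cycle_vertices" "w2 \<in> cycle_vertices" "parent w1 = parent w2"
    then show "w1 = w2"
      using parent_edge_reversed[OF w(1)] parent_edge_reversed[OF w(2)] single_head_g_parent[OF w(1)]
      unfolding single_head_def by auto
  qed
  moreover have "parent ` cycle_vertices \<subseteq> cycle_vertices" using parent_in by blast
  ultimately show ?thesis using endo_inj_surj[OF finite _ inj] unfolding bij_betw_def by blast
qed

lemma directed_cycles_parent: "directed_cycles h cycle_vertices parent"
  by (rule directed_cycles.intro[where h = h, OF bij_betw_parent parent_edge parent_directed parent_unique])

lemma g_cycle_column:
  assumes x: "x \<in> cycle_vertices"
  shows "g i x \<longleftrightarrow> i \<in> cycle_vertices \<and> parent i = x"
proof
  assume gi: "g i x"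
  obtain k where k: "k \<in> cycle_vertices" "x = parent k"
    using bij_betw_parent x unfolding bij_betw_def by blast
  have "g k x" using parent_edge_reversed[OF k(1)] k(2) by simp
  then have "i = k" using gi single_head_g_parent[OF k(1)] k(2) unfolding single_head_def by blast
  then show "i \<in> cycle_vertices \<and> parent i = x" using k by simp
next
  assume "i \<in> cycle_vertices \<and> parent i = x"
  then show "g i x" using parent_edge_reversed by blast
qed

lemma reverse_cycles_step:
  assumes irr: "irreflp h" and differ: "h i0 v \<noteq> g i0 v" and head: "h u v"
  shows "\<exists>h'. irreflp h' \<and> adjacent h' = adjacent h \<and> collider h' = collider h \<and>
           closure (head_model h') = closure (head_model h) \<and> disagreement h' g \<subset> disagreement h g"
proof -
  interpret C: directed_cycles h cycle_vertices parent by (rule directed_cycles_parent)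
  have "disagreement C.reversed g \<subset> disagreement h g"
  proof
    show "disagreement C.reversed g \<subseteq> disagreement h g"
      using g_cycle_column by (auto simp: disagreement_def C.reversed_def)
    have "v \<in> cycle_vertices" using differ head unfolding cycle_vertices_def by blast
    then have "(i0, v) \<notin> disagreement C.reversed g"
      using g_cycle_column by (simp add: disagreement_def C.reversed_in_cycle)
    moreover have "(i0, v) \<in> disagreement h g" using differ by (simp add: disagreement_def)
    ultimately show "disagreement C.reversed g \<noteq> disagreement h g" by blast
  qed
  then show ?thesis
    using C.irreflp_reversed[OF irr] C.adjacent_reversed C.collider_reversed C.closure_head_model_reversed
    by (intro exI[of _ C.reversed]) simp
qed

end

lemma exists_step_towards:
  fixes h g :: "'n::finite \<Rightarrow> 'n \<Rightarrow> bool"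
  assumes irr: "irreflp h" and adj: "adjacent h = adjacent g" and col: "collider h = collider g"
    and differ: "h i0 v \<noteq> g i0 v" and head: "h u v"
  shows "\<exists>h'. irreflp h' \<and> adjacent h' = adjacent h \<and> collider h' = collider h \<and>
           closure (head_model h') = closure (head_model h) \<and> disagreement h' g \<subset> disagreement h g"
proof (cases "\<exists>u w i. h u w \<and> h w u \<and> h i w \<noteq> g i w")
  case True
  then obtain u w i where uw: "h u w" "h w u" and differ_w: "h i w \<noteq> g i w" by blast
  have heads_w: "\<And>k. h k w \<Longrightarrow> k = u"
    using single_head_if_collider_eq[OF col differ_w] uw(1) unfolding single_head_def by blast
  have "h u w \<noteq> g u w" using head_flipped_if_collider_eq[OF col differ_w uw(1)] uw(1) by blast
  from toggle_step[where h = h and g = g and p = w and j = u, OF irr uw(2) heads_w this] show ?thesis .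
next
  case no_bidirected: False
  show ?thesis
  proof (cases "\<exists>u w. h u w \<and> g w u \<and> (\<forall>i. \<not> h i u)")
    case True
    then obtain u w where uw: "h u w" "g w u" and source: "\<And>i. \<not> h i u" by blast
    have "\<And>i. h i u \<Longrightarrow> i = w" and "h w u \<noteq> g w u" using source uw(2) by auto
    from toggle_step[where h = h and g = g and p = u and j = w, OF irr uw(1) this] show ?thesis .
  next
    case False
    then interpret cyclic_disagreement h g
      using adj col no_bidirected by unfold_locales blast+
    from reverse_cycles_step[OF irr differ head] show ?thesis .
  qed
qed

lemma closure_head_model_eq:
  fixes h g :: "'n::finite \<Rightarrow> 'n \<Rightarrow> bool"
  assumes "irreflp h" and "irreflp g" and "adjacent h = adjacent g" and "collider h = collider g"
  shows "closure (head_model h) = closure (head_model g)"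
  using assms
proof (induction "card (disagreement h g)" arbitrary: h g rule: less_induct)
  case less
  have card_less: "card A < card B" if "A \<subset> B" for A B :: "('n \<times> 'n) set"
    using that by (simp add: psubset_card_mono)
  show ?case
  proof (cases "h = g")
    case False
    then obtain i v where differ: "h i v \<noteq> g i v" by (auto simp: fun_eq_iff)
    show ?thesis
    proof (cases "\<exists>u. h u v")
      case True
      then obtain h' where h': "irreflp h'" "adjacent h' = adjacent h" "collider h' = collider h"
          "closure (head_model h') = closure (head_model h)" "disagreement h' g \<subset> disagreement h g"
        using exists_step_towards[OF less.prems(1,3,4) differ] by blast
      have "closure (head_model h') = closure (head_model g)"
        using less.hyps[OF card_less[OF h'(5)] h'(1) less.prems(2)] h'(2,3) less.prems(3,4) by simp
      then show ?thesis using h'(4) by simp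
    next
      case False
      then have "g i v" using differ by blast
      then obtain g' where g': "irreflp g'" "adjacent g' = adjacent g" "collider g' = collider g"
          "closure (head_model g') = closure (head_model g)" "disagreement g' h \<subset> disagreement g h"
        using exists_step_towards[OF less.prems(2) less.prems(3,4)[symmetric] not_sym[OF differ]] by blast
      have "card (disagreement h g') < card (disagreement h g)"
        using card_less[OF g'(5)] by (simp add: disagreement_commute)
      then have "closure (head_model h) = closure (head_model g')"
        using less.hyps[of h g'] less.prems(1) g'(1,2,3) less.prems(3,4) by simp
      then show ?thesis using g'(4) by simp
    qed
  qed simp
qed

lemma simple_mixed_graph_head_edge:
  assumes simple: "simple_mixed_graph D B"
  shows "directed_edges (head_edge D B) = D" and "bidirected_edges (head_edge D B) = B"
    and "irreflp (head_edge D B)"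
proof -
  have D_irrefl: "(i, j) \<in> D \<Longrightarrow> i \<noteq> j" for i j
    using simple unfolding simple_mixed_graph_def mixed_graph_def by blast
  have B_pairs: "e \<in> B \<Longrightarrow> \<exists>i j. i \<noteq> j \<and> e = {i, j}" for e
    using simple unfolding simple_mixed_graph_def mixed_graph_def by blast
  have single_edge: "\<not> ((i, j) \<in> D \<and> (j, i) \<in> D) \<and> \<not> ((i, j) \<in> D \<and> {i, j} \<in> B)"
    if "i \<noteq> j" for i j
    using simple that unfolding simple_mixed_graph_def by blast
  have D_antisym: "(j, i) \<notin> D" and D_B: "{i, j} \<notin> B" if "(i, j) \<in> D" for i j
    using single_edge[OF D_irrefl[OF that]] that by blast+
  have "{i} \<notin> B" for i
  proof
    assume "{i} \<in> B"
    then obtain a b where "a \<noteq> b" "{i} = {a, b}" using B_pairs by blast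
    then show False by simp
  qed
  then show "irreflp (head_edge D B)"
    using D_irrefl by (auto simp: irreflp_def head_edge_def)
  show "directed_edges (head_edge D B) = D"
    using D_antisym D_B by (auto simp: directed_edges_def head_edge_def insert_commute)
  show "bidirected_edges (head_edge D B) = B"
  proof safe
    fix e assume "e \<in> bidirected_edges (head_edge D B)"
    then obtain i j where e: "e = {i, j}" "head_edge D B i j" "head_edge D B j i"
      unfolding bidirected_edges_def by blast
    then show "e \<in> B" using D_antisym by (auto simp: head_edge_def insert_commute)
  next
    fix e assume "e \<in> B"
    then show "e \<in> bidirected_edges (head_edge D B)"
      using B_pairs[of e] by (auto simp: bidirected_edges_def head_edge_def insert_commute)
  qed
qed

lemma doubleton_in_skeleton_iff: "{a, b} \<in> skeleton D B \<longleftrightarrow> adjacent (head_edge D B) a b"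
  by (auto simp: skeleton_def adjacent_def head_edge_def doubleton_eq_iff insert_commute)

lemma in_colliders_iff: "(i, j, k) \<in> colliders D B \<longleftrightarrow> collider (head_edge D B) i j k"
  by (simp add: colliders_def collider_def)

theorem theorem2:
  fixes D1 D2 :: "('n::finite \<times> 'n) set" and B1 B2 :: "'n set set"
  assumes "simple_mixed_graph D1 B1" and "simple_mixed_graph D2 B2"
    and "skeleton D1 B1 = skeleton D2 B2"
    and "colliders D1 B1 = colliders D2 B2"
  shows "closure (model D1 B1) = closure (model D2 B2)"
proof -
  note G1 = simple_mixed_graph_head_edge[OF assms(1)]
  note G2 = simple_mixed_graph_head_edge[OF assms(2)]
  have "adjacent (head_edge D1 B1) = adjacent (head_edge D2 B2)"
    using assms(3) by (intro ext) (metis doubleton_in_skeleton_iff)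
  moreover have "collider (head_edge D1 B1) = collider (head_edge D2 B2)"
    using assms(4) by (intro ext) (metis in_colliders_iff)
  ultimately have "closure (head_model (head_edge D1 B1)) = closure (head_model (head_edge D2 B2))"
    using closure_head_model_eq G1(3) G2(3) by blast
  then show ?thesis unfolding head_model_def G1(1,2) G2(1,2) .
qed

end
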